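(* Let $\mathbf{m}\in\mathbb{R}^{kn\times kn}$ be diagonal with strictly positive diagonal and let $b_n=(\mathbf{x}'\mathbf{m}\pi\mathbf{x})^{+}\mathbf{x}'\mathbf{m}\pi y$. If there exists $\mathbf{t}\in\mathbb{R}^{(k+p)\times k}$ with $\mathbf{x}\mathbf{t}=\mathbf{m}^{-1}\pi^{-1}\mathbf{1}$ (i.e. every column of $\mathbf{m}^{-1}\pi^{-1}\mathbf{1}$ lies in the column space of $\mathbf{x}$), then $$\frac1n\mathbf{1}'\mathbf{x}b_n=\frac1n\mathbf{1}'y,$$ i.e. the probability limit of the completely imputed (and WLS) estimator equals the vector of average potential outcomes.
   Context: $k$ arms, $n$ units, $p$ covariates. $y\in\mathbb{R}^{kn}$ stacks the potential outcome vectors of the $k$ arms. $\pi\in\mathbb{R}^{kn\times kn}$ is the diagonal matrix of assignment probabilities $\pi_{ai}\in(0,1)$ (ordered arm by arm). $\mathbf{1}=I_k\otimes1_n\in\mathbb{R}^{kn\times k}$. With covariate matrix $X\in\mathbb{R}^{n\times p}$, $\mathbf{x}=[\mathbf{1}\mid1_k\otimes X]\in\mathbb{R}^{kn\times(k+p)}$. $A^+$ is the Moore–Penrose inverse. *)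

theory Defs
  imports "Jordan_Normal_Form.Matrix"
begin

definition is_mp_inverse :: "real mat \<Rightarrow> real mat \<Rightarrow> bool" where
  "is_mp_inverse A B \<longleftrightarrow>
     B \<in> carrier_mat (dim_col A) (dim_row A) \<and>
     A * B * A = A \<and> B * A * B = B \<and>
     transpose_mat (A * B) = A * B \<and> transpose_mat (B * A) = B * A"

definition mp_inverse :: "real mat \<Rightarrow> real mat" where
  "mp_inverse A = (THE B. is_mp_inverse A B)"

(* bold 1 = I_k \<otimes> 1_n : (kn) x k; row index r = a*n + i (arm a, unit i) *)
definition ones_blk :: "nat \<Rightarrow> nat \<Rightarrow> real mat" where
  "ones_blk k n = mat (k * n) k (\<lambda>(r, c). if r div n = c then 1 else 0)"

(* 1_k \<otimes> X : (kn) x p *)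
definition kron_ones :: "nat \<Rightarrow> real mat \<Rightarrow> real mat" where
  "kron_ones k X = mat (k * dim_row X) (dim_col X) (\<lambda>(r, c). X $$ (r mod dim_row X, c))"

(* bold x = [ bold 1 | 1_k \<otimes> X ] : (kn) x (k+p) *)
definition design :: "nat \<Rightarrow> real mat \<Rightarrow> real mat" where
  "design k X = four_block_mat (ones_blk k (dim_row X)) (kron_ones k X)
                  (0\<^sub>m 0 k) (0\<^sub>m 0 (dim_col X))"

end

theory Submission
  imports Defs
begin

text \<open>
  Write \<open>D = m \<pi>\<close> and \<open>A = x' D x\<close>. The normal equations \<open>x' D x b\<^sub>n = x' D y\<close> hold for
  \<open>b\<^sub>n = A\<^sup>+ x' D y\<close>: the Penrose conditions make \<open>P = A A\<^sup>+\<close> symmetric with \<open>P A = A\<close>, so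
  \<open>Y = x - x P\<close> satisfies \<open>Y' D Y = 0\<close>, hence \<open>Y = 0\<close> as \<open>D\<close> is positive definite, i.e.
  \<open>P x' D = x' D\<close>. If \<open>x t = D\<^sup>-\<^sup>1 \<one>\<close> then \<open>\<one>' = t' x' D\<close>, and multiplying the normal
  equations by \<open>t'\<close> gives \<open>\<one>' x b\<^sub>n = \<one>' y\<close>.

  Since the Moore--Penrose inverse is defined by a description, its existence for the symmetric
  matrix \<open>A\<close> has to be proved as well. Some nontrivial polynomial vanishes at a square matrix
  \<open>S\<close>; if \<open>c\<^sub>r X\<^sup>r\<close> is its lowest term, then \<open>S\<^sup>r (c\<^sub>r I + S G) = 0\<close> with \<open>G\<close> a polynomial
  in \<open>S\<close>. For symmetric \<open>S\<close> the kernels of all powers \<open>S\<^sup>r\<close>, \<open>r \<ge> 1\<close>, coincide, so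
  \<open>S = S\<^sup>2 T\<close> with \<open>T = -G / c\<^sub>r\<close>, and \<open>T S T\<close> satisfies the four Penrose conditions.
\<close>

lemma transpose_mult3:
  fixes A B C :: "'a :: comm_semiring_0 mat"
  assumes "A \<in> carrier_mat a b" "B \<in> carrier_mat b c" "C \<in> carrier_mat c e"
  shows "transpose_mat (A * B * C) = transpose_mat C * transpose_mat B * transpose_mat A"
  using transpose_mult[OF mult_carrier_mat[OF assms(1,2)] assms(3)] transpose_mult[OF assms(1,2)] assms
  by (simp add: assoc_mult_mat[of "transpose_mat C" e c _ b _ a])

lemma transpose_mat_diag [simp]: "transpose_mat (mat_diag n f) = mat_diag n f"
  by (rule eq_matI) (auto simp: mat_diag_def)

lemma mat_diag_cong: "(\<And>i. i < n \<Longrightarrow> f i = g i) \<Longrightarrow> mat_diag n f = mat_diag n g"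
  by (rule eq_matI) (auto simp: mat_diag_def)

lemma weighted_gram_eq_zero:
  fixes Y :: "real mat"
  assumes Y: "Y \<in> carrier_mat m e" and pos: "\<And>i. i < m \<Longrightarrow> \<delta> i > 0"
    and zero: "transpose_mat Y * mat_diag m \<delta> * Y = 0\<^sub>m e e"
  shows "Y = 0\<^sub>m m e"
proof (rule eq_matI)
  fix i j assume "i < dim_row (0\<^sub>m m e)" "j < dim_col (0\<^sub>m m e)"
  hence i: "i < m" and j: "j < e" by auto
  have YD: "transpose_mat Y * mat_diag m \<delta> = mat e m (\<lambda>(j,i). Y $$ (i,j) * \<delta> i)"
    using Y by (subst mat_diag_mult_right[of _ e]) auto
  have "(transpose_mat Y * mat_diag m \<delta> * Y) $$ (j,j) = (\<Sum>l<m. \<delta> l * (Y $$ (l,j))\<^sup>2)"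
    unfolding YD using Y j
    by (auto simp: scalar_prod_def lessThan_atLeast0 power2_eq_square intro!: sum.cong)
  hence "(\<Sum>l<m. \<delta> l * (Y $$ (l,j))\<^sup>2) = 0" using zero j by simp
  moreover have "0 \<le> \<delta> l * (Y $$ (l,j))\<^sup>2" if "l \<in> {..<m}" for l
    using pos that by (simp add: less_imp_le)
  ultimately have "\<delta> i * (Y $$ (i,j))\<^sup>2 = 0"
    using sum_nonneg_eq_0_iff[of "{..<m}" "\<lambda>l. \<delta> l * (Y $$ (l,j))\<^sup>2"] i by blast
  thus "Y $$ (i,j) = 0\<^sub>m m e $$ (i,j)" using pos[OF i] i j by simp
qed (use Y in auto)

subsection \<open>Uniqueness of the Moore--Penrose inverse\<close>

lemma penrose_absorb:
  fixes A B C :: "real mat"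
  assumes A: "A \<in> carrier_mat m n" and B: "B \<in> carrier_mat n m" and C: "C \<in> carrier_mat n m"
    and B2: "B * A * B = B" and B3: "transpose_mat (A * B) = A * B"
    and C1: "A * C * A = A" and C3: "transpose_mat (A * C) = A * C"
  shows "B = B * A * C"
proof -
  have At: "transpose_mat A \<in> carrier_mat n m" and Bt: "transpose_mat B \<in> carrier_mat m n"
    and Ct: "transpose_mat C \<in> carrier_mat m n" using A B C by auto
  have tA: "transpose_mat A = transpose_mat A * (transpose_mat C * transpose_mat A)"
    using arg_cong[OF C1, of transpose_mat]
    unfolding transpose_mult[OF mult_carrier_mat[OF A C] A] transpose_mult[OF A C] by simp
  have AB: "A * B = transpose_mat B * transpose_mat A" using B3 transpose_mult[OF A B] by simp
  have "B = B * (A * B)" using B2 assoc_mult_mat[OF B A B] by simp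
  also have "A * B = (transpose_mat B * transpose_mat A) * (transpose_mat C * transpose_mat A)"
    using AB tA assoc_mult_mat[OF Bt At mult_carrier_mat[OF Ct At]] by simp
  also have "\<dots> = (A * B) * (A * C)"
    using B3 C3 transpose_mult[OF A B] transpose_mult[OF A C] by simp
  also have "B * ((A * B) * (A * C)) = (B * A * B) * (A * C)"
    using assoc_mult_mat[OF B mult_carrier_mat[OF A B] mult_carrier_mat[OF A C]]
      assoc_mult_mat[OF B A B] by simp
  also have "\<dots> = B * A * C" using B2 B A C by simp
  finally show ?thesis .
qed

lemma is_mp_inverse_unique:
  fixes A B C :: "real mat"
  assumes A: "A \<in> carrier_mat m n" and B: "is_mp_inverse A B" and C: "is_mp_inverse A C"
  shows "B = C"
proof -
  from B A have Bc: "B \<in> carrier_mat n m" and B1: "A * B * A = A" and B2: "B * A * B = B"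
    and B3: "transpose_mat (A * B) = A * B" and B4: "transpose_mat (B * A) = B * A"
    unfolding is_mp_inverse_def by auto
  from C A have Cc: "C \<in> carrier_mat n m" and C1: "A * C * A = A" and C2: "C * A * C = C"
    and C3: "transpose_mat (A * C) = A * C" and C4: "transpose_mat (C * A) = C * A"
    unfolding is_mp_inverse_def by auto
  have At: "transpose_mat A \<in> carrier_mat n m" and Bt: "transpose_mat B \<in> carrier_mat m n"
    and Ct: "transpose_mat C \<in> carrier_mat m n" using A Bc Cc by auto
  have BAC: "B = B * A * C" by (rule penrose_absorb[OF A Bc Cc B2 B3 C1 C3])
  have "transpose_mat C = transpose_mat C * transpose_mat A * transpose_mat B"
  proof (rule penrose_absorb[OF At Ct Bt])
    show "transpose_mat C * transpose_mat A * transpose_mat C = transpose_mat C"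
      using C2 transpose_mult3[OF Cc A Cc] by simp
    show "transpose_mat (transpose_mat A * transpose_mat C) = transpose_mat A * transpose_mat C"
      using C4 transpose_mult[OF Cc A] by simp
    show "transpose_mat A * transpose_mat B * transpose_mat A = transpose_mat A"
      using B1 transpose_mult3[OF A Bc A] by simp
    show "transpose_mat (transpose_mat A * transpose_mat B) = transpose_mat A * transpose_mat B"
      using B4 transpose_mult[OF Bc A] by simp
  qed
  hence "C = B * A * C"
    using transpose_mult3[OF Ct At Bt] by (metis transpose_transpose)
  with BAC show ?thesis by simp
qed

lemma is_mp_inverse_mp_inverse:
  assumes "A \<in> carrier_mat m n" and "is_mp_inverse A B"
  shows "is_mp_inverse A (mp_inverse A)"
  unfolding mp_inverse_def using theI[of "is_mp_inverse A", OF assms(2)]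
    is_mp_inverse_unique[OF assms] by blast

subsection \<open>Polynomial relations of square matrices\<close>

lemma homogeneous_system_nontrivial_solution:
  fixes a :: "nat \<Rightarrow> nat \<Rightarrow> 'a :: field"
  assumes "finite J" "m < card J"
  shows "\<exists>x. (\<exists>j\<in>J. x j \<noteq> 0) \<and> (\<forall>i<m. (\<Sum>j\<in>J. a i j * x j) = 0)"
  using assms
proof (induction m arbitrary: J a)
  case 0
  then obtain j0 where "j0 \<in> J" by (metis card.empty ex_in_conv less_irrefl)
  thus ?case by (intro exI[of _ "\<lambda>_. 1"]) auto
next
  case (Suc m J a)
  show ?case
  proof (cases "\<forall>j\<in>J. a m j = 0")
    case True
    with Suc.IH[of J a] Suc.prems show ?thesis by (auto simp: less_Suc_eq)
  next
    case False
    then obtain j0 where j0: "j0 \<in> J" and nz: "a m j0 \<noteq> 0" by auto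
    define J' where "J' = J - {j0}"
    have "finite J'" "m < card J'" using Suc.prems j0 unfolding J'_def by auto
    \<comment> \<open>eliminate the unknown \<open>x j0\<close> using equation \<open>m\<close>\<close>
    from Suc.IH[OF this, of "\<lambda>i j. a i j - a i j0 * a m j / a m j0"] obtain z
      where z: "\<exists>j\<in>J'. z j \<noteq> 0"
        "\<forall>i<m. (\<Sum>j\<in>J'. (a i j - a i j0 * a m j / a m j0) * z j) = 0" by auto
    define S where "S = (\<Sum>j\<in>J'. a m j * z j)"
    define x where "x = z(j0 := - S / a m j0)"
    have split: "(\<Sum>j\<in>J. a i j * x j) = a i j0 * x j0 + (\<Sum>j\<in>J'. a i j * z j)" for i
    proof -
      have "(\<Sum>j\<in>J. a i j * x j) = a i j0 * x j0 + (\<Sum>j\<in>J'. a i j * x j)"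
        unfolding J'_def using Suc.prems(1) j0 by (simp add: sum.remove)
      also have "(\<Sum>j\<in>J'. a i j * x j) = (\<Sum>j\<in>J'. a i j * z j)"
        by (rule sum.cong) (auto simp: x_def J'_def)
      finally show ?thesis .
    qed
    have "(\<Sum>j\<in>J. a i j * x j) = 0" if i: "i < Suc m" for i
    proof (cases "i = m")
      case True
      thus ?thesis unfolding split using nz by (simp add: x_def S_def)
    next
      case False
      with i z(2) have "(\<Sum>j\<in>J'. (a i j - a i j0 * a m j / a m j0) * z j) = 0" by auto
      moreover have "(\<Sum>j\<in>J'. (a i j - a i j0 * a m j / a m j0) * z j)
          = (\<Sum>j\<in>J'. a i j * z j) - a i j0 / a m j0 * S"
        unfolding S_def by (simp add: algebra_simps sum_subtractf sum_distrib_left)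
      ultimately show ?thesis unfolding split using nz by (simp add: x_def)
    qed
    moreover have "\<exists>j\<in>J. x j \<noteq> 0" using z(1) unfolding x_def J'_def by auto
    ultimately show ?thesis by blast
  qed
qed

definition mat_lincomb :: "nat \<Rightarrow> (nat \<Rightarrow> real) \<Rightarrow> nat \<Rightarrow> (nat \<Rightarrow> real mat) \<Rightarrow> real mat" where
  "mat_lincomb d c N M = mat d d (\<lambda>(i,k). \<Sum>j<N. c j * M j $$ (i,k))"

lemma mat_lincomb_carrier [simp]: "mat_lincomb d c N M \<in> carrier_mat d d"
  and mat_lincomb_dim [simp]: "dim_row (mat_lincomb d c N M) = d" "dim_col (mat_lincomb d c N M) = d"
  unfolding mat_lincomb_def by auto

lemma mult_mat_lincomb_left:
  assumes A: "A \<in> carrier_mat d d" and M: "\<And>j. M j \<in> carrier_mat d d"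
  shows "A * mat_lincomb d c N M = mat_lincomb d c N (\<lambda>j. A * M j)"
proof (rule eq_matI)
  fix i k assume "i < dim_row (mat_lincomb d c N (\<lambda>j. A * M j))"
    "k < dim_col (mat_lincomb d c N (\<lambda>j. A * M j))"
  hence i: "i < d" and k: "k < d" by (auto simp: mat_lincomb_def)
  have "(A * mat_lincomb d c N M) $$ (i,k) = (\<Sum>l<d. A $$ (i,l) * (\<Sum>j<N. c j * M j $$ (l,k)))"
    using A i k M
    by (auto simp: mat_lincomb_def scalar_prod_def lessThan_atLeast0 carrier_matD[OF M]
        intro!: sum.cong)
  also have "\<dots> = (\<Sum>j<N. c j * (\<Sum>l<d. A $$ (i,l) * M j $$ (l,k)))"
    by (simp add: sum_distrib_left algebra_simps sum.swap[of _ "{..<d}"])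
  also have "\<dots> = mat_lincomb d c N (\<lambda>j. A * M j) $$ (i,k)"
    using A i k M
    by (auto simp: mat_lincomb_def scalar_prod_def lessThan_atLeast0 carrier_matD[OF M]
        intro!: sum.cong)
  finally show "(A * mat_lincomb d c N M) $$ (i,k) = mat_lincomb d c N (\<lambda>j. A * M j) $$ (i,k)" .
qed (use A in \<open>auto simp: mat_lincomb_def\<close>)

lemma mult_mat_lincomb_right:
  assumes A: "A \<in> carrier_mat d d" and M: "\<And>j. M j \<in> carrier_mat d d"
  shows "mat_lincomb d c N M * A = mat_lincomb d c N (\<lambda>j. M j * A)"
proof (rule eq_matI)
  fix i k assume "i < dim_row (mat_lincomb d c N (\<lambda>j. M j * A))"
    "k < dim_col (mat_lincomb d c N (\<lambda>j. M j * A))"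
  hence i: "i < d" and k: "k < d" by (auto simp: mat_lincomb_def)
  have "(mat_lincomb d c N M * A) $$ (i,k) = (\<Sum>l<d. (\<Sum>j<N. c j * M j $$ (i,l)) * A $$ (l,k))"
    using A i k M
    by (auto simp: mat_lincomb_def scalar_prod_def lessThan_atLeast0 carrier_matD[OF M]
        intro!: sum.cong)
  also have "\<dots> = (\<Sum>j<N. c j * (\<Sum>l<d. M j $$ (i,l) * A $$ (l,k)))"
    by (simp add: sum_distrib_left sum_distrib_right algebra_simps sum.swap[of _ "{..<d}"])
  also have "\<dots> = mat_lincomb d c N (\<lambda>j. M j * A) $$ (i,k)"
    using A i k M
    by (auto simp: mat_lincomb_def scalar_prod_def lessThan_atLeast0 carrier_matD[OF M]
        intro!: sum.cong)
  finally show "(mat_lincomb d c N M * A) $$ (i,k) = mat_lincomb d c N (\<lambda>j. M j * A) $$ (i,k)" .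
qed (use A in \<open>auto simp: mat_lincomb_def\<close>)

lemma transpose_mat_lincomb:
  assumes M: "\<And>j. M j \<in> carrier_mat d d"
  shows "transpose_mat (mat_lincomb d c N M) = mat_lincomb d c N (\<lambda>j. transpose_mat (M j))"
  by (rule eq_matI) (use M in \<open>auto simp: mat_lincomb_def carrier_matD[OF M]\<close>)

lemma mat_lincomb_Suc:
  assumes M: "\<And>j. M j \<in> carrier_mat d d"
  shows "mat_lincomb d c (Suc N) M
    = c 0 \<cdot>\<^sub>m M 0 + mat_lincomb d (\<lambda>j. c (Suc j)) N (\<lambda>j. M (Suc j))"
  by (rule eq_matI)
    (use M in \<open>auto simp del: sum.lessThan_Suc
       simp: mat_lincomb_def sum.lessThan_Suc_shift carrier_matD[OF M]\<close>)

lemma mat_lincomb_shift: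
  assumes "\<And>j. j < r \<Longrightarrow> c j = 0"
  shows "mat_lincomb d c (r + N) M = mat_lincomb d (\<lambda>j. c (j + r)) N (\<lambda>j. M (j + r))"
  using assms
proof (induction r arbitrary: c M)
  case (Suc r c M)
  have "mat_lincomb d c (Suc r + N) M = mat_lincomb d (\<lambda>j. c (Suc j)) (r + N) (\<lambda>j. M (Suc j))"
    using Suc.prems[of 0] unfolding mat_lincomb_def
    by (simp del: sum.lessThan_Suc add: sum.lessThan_Suc_shift)
  also have "\<dots> = mat_lincomb d (\<lambda>j. c (Suc (j + r))) N (\<lambda>j. M (Suc (j + r)))"
    using Suc.IH[of "\<lambda>j. c (Suc j)" "\<lambda>j. M (Suc j)"] Suc.prems by auto
  finally show ?case by simp
qed simp

lemma pow_mat_commute: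
  assumes S: "S \<in> carrier_mat d d"
  shows "S * S ^\<^sub>m j = S ^\<^sub>m j * S"
proof (induction j)
  case (Suc j)
  have "S * S ^\<^sub>m Suc j = (S * S ^\<^sub>m j) * S"
    using assoc_mult_mat[OF S pow_carrier_mat[OF S] S] by simp
  thus ?case using Suc by simp
qed (use S in simp)

lemma pow_mat_Suc_left:
  assumes "S \<in> carrier_mat d d"
  shows "S ^\<^sub>m Suc j = S * S ^\<^sub>m j"
  using pow_mat_commute[OF assms] by simp

lemma pow_mat_add:
  assumes S: "S \<in> carrier_mat d d"
  shows "S ^\<^sub>m (j + r) = S ^\<^sub>m r * S ^\<^sub>m j"
proof (induction j)
  case (Suc j)
  have "S ^\<^sub>m (Suc j + r) = S ^\<^sub>m r * S ^\<^sub>m j * S" using Suc by simp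
  thus ?case using assoc_mult_mat[OF pow_carrier_mat[OF S] pow_carrier_mat[OF S] S] by simp
qed (use S in simp)

lemma transpose_pow_mat:
  fixes S :: "'a :: comm_semiring_1 mat"
  assumes S: "S \<in> carrier_mat d d" and St: "transpose_mat S = S"
  shows "transpose_mat (S ^\<^sub>m j) = S ^\<^sub>m j"
proof (induction j)
  case (Suc j)
  have "transpose_mat (S ^\<^sub>m Suc j) = transpose_mat S * transpose_mat (S ^\<^sub>m j)"
    using transpose_mult[OF pow_carrier_mat[OF S] S] by simp
  thus ?case using Suc St pow_mat_Suc_left[OF S] by simp
qed (use S in simp)

lemma pow_mat_nontrivial_relation:
  assumes S: "S \<in> carrier_mat d d"
  shows "\<exists>c N. (\<exists>j<N. c j \<noteq> 0) \<and> mat_lincomb d c N (\<lambda>j. S ^\<^sub>m j) = 0\<^sub>m d d"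
proof -
  \<comment> \<open>\<open>d\<^sup>2 + 1\<close> powers in a \<open>d\<^sup>2\<close>-dimensional space; entry \<open>(i, k)\<close> is equation \<open>i d + k\<close>\<close>
  define a where "a i j = (S ^\<^sub>m j) $$ (i div d, i mod d)" for i j
  from homogeneous_system_nontrivial_solution[of "{..<d*d+1}" "d*d" a] obtain c where
    c: "\<exists>j\<in>{..<d*d+1}. c j \<noteq> 0" "\<forall>i<d*d. (\<Sum>j\<in>{..<d*d+1}. a i j * c j) = 0" by auto
  have "mat_lincomb d c (d*d+1) (\<lambda>j. S ^\<^sub>m j) = 0\<^sub>m d d"
  proof (rule eq_matI)
    fix i k assume "i < dim_row (0\<^sub>m d d :: real mat)" "k < dim_col (0\<^sub>m d d :: real mat)"
    hence i: "i < d" and k: "k < d" by auto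
    have "i * d + k < Suc i * d" using k by simp
    also have "\<dots> \<le> d * d" using i by (intro mult_le_mono1) simp
    finally have lt: "i * d + k < d * d" .
    have dv: "(i * d + k) div d = i" "(i * d + k) mod d = k" using k by auto
    have "mat_lincomb d c (d*d+1) (\<lambda>j. S ^\<^sub>m j) $$ (i,k) = (\<Sum>j<d*d+1. a (i*d+k) j * c j)"
      using i k unfolding mat_lincomb_def a_def dv by (auto intro!: sum.cong)
    also have "\<dots> = 0" using c(2) lt by auto
    finally show "mat_lincomb d c (d*d+1) (\<lambda>j. S ^\<^sub>m j) $$ (i,k) = 0\<^sub>m d d $$ (i,k)"
      using i k by simp
  qed simp_all
  with c(1) show ?thesis by blast
qed

subsection \<open>Existence of the Moore--Penrose inverse of a symmetric matrix\<close>

lemma is_mp_inverse_of_regular_commuting: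
  fixes S T :: "real mat"
  assumes S: "S \<in> carrier_mat d d" and St: "transpose_mat S = S"
    and T: "T \<in> carrier_mat d d" and Tt: "transpose_mat T = T"
    and comm: "S * T = T * S" and reg: "S * (S * T) = S"
  shows "is_mp_inverse S (T * S * T)"
proof -
  have STS: "S * (T * S) = S" using comm reg by simp
  have STt: "transpose_mat (S * T) = S * T" using transpose_mult[OF S T] St Tt comm by simp
  have TS: "T * S \<in> carrier_mat d d" and TST: "T * S * T \<in> carrier_mat d d" using S T by auto
  have SB: "S * (T * S * T) = S * T"
  proof -
    have "S * (T * S * T) = (S * (T * S)) * T"
      using assoc_mult_mat[OF T S T] assoc_mult_mat[OF S TS T] by simp
    thus ?thesis using STS by simp
  qed
  have BS: "T * S * T * S = T * S"
  proof -
    have "T * S * T * S = T * (S * (T * S))"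
      using assoc_mult_mat[OF TS T S] assoc_mult_mat[OF T S TS] by simp
    thus ?thesis using STS by simp
  qed
  show ?thesis unfolding is_mp_inverse_def
  proof (intro conjI)
    show "T * S * T \<in> carrier_mat (dim_col S) (dim_row S)" using S T by simp
    show "S * (T * S * T) * S = S" using SB STS assoc_mult_mat[OF S T S] by simp
    have "T * S * T * S * (T * S * T) = T * (S * (T * S * T))"
      using BS assoc_mult_mat[OF T S TST] by simp
    thus "T * S * T * S * (T * S * T) = T * S * T" using SB assoc_mult_mat[OF T S T] by simp
    show "transpose_mat (S * (T * S * T)) = S * (T * S * T)" using SB STt by simp
    show "transpose_mat (T * S * T * S) = T * S * T * S" using BS STt comm by simp
  qed
qed

lemma symmetric_mult_mult_eq_zero:
  fixes S X :: "real mat"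
  assumes S: "S \<in> carrier_mat d d" and St: "transpose_mat S = S" and X: "X \<in> carrier_mat d e"
    and zero: "S * (S * X) = 0\<^sub>m d e"
  shows "S * X = 0\<^sub>m d e"
proof (rule weighted_gram_eq_zero[of _ d e "\<lambda>_. 1"])
  show SX: "S * X \<in> carrier_mat d e" using S X by simp
  have "transpose_mat (S * X) * mat_diag d (\<lambda>_. 1) * (S * X) = transpose_mat X * (S * (S * X))"
    using transpose_mult[OF S X] St right_mult_one_mat[OF transpose_carrier_mat[THEN iffD2, OF SX]]
      assoc_mult_mat[OF transpose_carrier_mat[THEN iffD2, OF X] S SX] by simp
  thus "transpose_mat (S * X) * mat_diag d (\<lambda>_. 1) * (S * X) = 0\<^sub>m e e" using zero X by simp
qed simp

lemma symmetric_pow_mult_eq_zero: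
  fixes S X :: "real mat"
  assumes S: "S \<in> carrier_mat d d" and St: "transpose_mat S = S"
  shows "X \<in> carrier_mat d e \<Longrightarrow> S ^\<^sub>m (Suc r) * X = 0\<^sub>m d e \<Longrightarrow> S * X = 0\<^sub>m d e"
proof (induction r arbitrary: X)
  case (Suc r X)
  have "S ^\<^sub>m (Suc r) * (S * X) = S ^\<^sub>m (Suc (Suc r)) * X"
    using assoc_mult_mat[OF pow_carrier_mat[OF S] S Suc.prems(1), of "Suc r"] by simp
  with Suc.prems have "S ^\<^sub>m (Suc r) * (S * X) = 0\<^sub>m d e" by simp
  from Suc.IH[OF _ this] S Suc.prems(1) have "S * (S * X) = 0\<^sub>m d e" by simp
  from symmetric_mult_mult_eq_zero[OF S St Suc.prems(1) this] show ?case .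
qed (use S in simp)

definition mat_poly :: "nat \<Rightarrow> (nat \<Rightarrow> real) \<Rightarrow> nat \<Rightarrow> real mat \<Rightarrow> real mat" where
  "mat_poly d c N S = mat_lincomb d c N (\<lambda>j. S ^\<^sub>m j)"

lemma mat_poly_carrier [simp]: "mat_poly d c N S \<in> carrier_mat d d"
  unfolding mat_poly_def by simp

lemma mat_poly_commute:
  assumes S: "S \<in> carrier_mat d d"
  shows "S * mat_poly d c N S = mat_poly d c N S * S"
  unfolding mat_poly_def using S
  by (simp add: mult_mat_lincomb_left[OF S] mult_mat_lincomb_right[OF S] pow_mat_commute[OF S])

lemma transpose_mat_poly:
  assumes S: "S \<in> carrier_mat d d" and St: "transpose_mat S = S"
  shows "transpose_mat (mat_poly d c N S) = mat_poly d c N S"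
  unfolding mat_poly_def using S by (simp add: transpose_mat_lincomb transpose_pow_mat[OF S St])

lemma pow_mat_relation_lowest_term:
  fixes S :: "real mat"
  assumes S: "S \<in> carrier_mat d d"
  obtains a r c M where "a \<noteq> 0" "S ^\<^sub>m r * (a \<cdot>\<^sub>m 1\<^sub>m d + S * mat_poly d c M S) = 0\<^sub>m d d"
proof -
  obtain c N where "\<exists>j<N. c j \<noteq> 0" and rel: "mat_lincomb d c N (\<lambda>j. S ^\<^sub>m j) = 0\<^sub>m d d"
    using pow_mat_nontrivial_relation[OF S] by blast
  then obtain j0 where j0: "j0 < N" "c j0 \<noteq> 0" by auto
  define r where "r = (LEAST j. c j \<noteq> 0)"
  have cr: "c r \<noteq> 0" unfolding r_def using j0(2) by (rule LeastI)
  have "r < N" using Least_le[of "\<lambda>j. c j \<noteq> 0" j0] j0 unfolding r_def by simp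
  then obtain M where N: "N = r + Suc M" by (metis add_Suc_right less_iff_Suc_add)
  have below: "c j = 0" if "j < r" for j
    using not_less_Least[of j "\<lambda>j. c j \<noteq> 0"] that unfolding r_def by blast
  define pw where "pw = (\<lambda>j. S ^\<^sub>m j)"
  have pw: "\<And>j. pw j \<in> carrier_mat d d" unfolding pw_def using S by simp
  define H where "H = mat_lincomb d (\<lambda>j. c (j + r)) (Suc M) pw"
  have "mat_lincomb d c N pw = mat_lincomb d (\<lambda>j. c (j + r)) (Suc M) (\<lambda>j. pw (j + r))"
    unfolding N by (rule mat_lincomb_shift[OF below])
  also have "(\<lambda>j. pw (j + r)) = (\<lambda>j. S ^\<^sub>m r * pw j)"
    unfolding pw_def using pow_mat_add[OF S] by auto
  also have "mat_lincomb d (\<lambda>j. c (j + r)) (Suc M) \<dots> = S ^\<^sub>m r * H"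
    unfolding H_def by (rule mult_mat_lincomb_left[symmetric]) (use S pw in auto)
  finally have SrH: "S ^\<^sub>m r * H = 0\<^sub>m d d" using rel unfolding pw_def by simp
  have "H = c (0 + r) \<cdot>\<^sub>m pw 0 + mat_lincomb d (\<lambda>j. c (Suc j + r)) M (\<lambda>j. pw (Suc j))"
    unfolding H_def by (rule mat_lincomb_Suc[OF pw])
  also have "(\<lambda>j. pw (Suc j)) = (\<lambda>j. S * pw j)"
    unfolding pw_def using pow_mat_Suc_left[OF S] by auto
  also have "mat_lincomb d (\<lambda>j. c (Suc j + r)) M \<dots> = S * mat_poly d (\<lambda>j. c (Suc j + r)) M S"
    unfolding mat_poly_def pw_def[symmetric]
    by (rule mult_mat_lincomb_left[symmetric]) (use S pw in auto)
  finally have "H = c r \<cdot>\<^sub>m 1\<^sub>m d + S * mat_poly d (\<lambda>j. c (Suc j + r)) M S"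
    unfolding pw_def using S by simp
  with SrH cr show ?thesis by (intro that) auto
qed

lemma symmetric_regular_by_polynomial:
  fixes S :: "real mat"
  assumes S: "S \<in> carrier_mat d d" and St: "transpose_mat S = S"
  obtains T where "T \<in> carrier_mat d d" "transpose_mat T = T" "S * T = T * S"
    and "S * (S * T) = S"
proof -
  obtain a r c M where a: "a \<noteq> 0"
    and rel: "S ^\<^sub>m r * (a \<cdot>\<^sub>m 1\<^sub>m d + S * mat_poly d c M S) = 0\<^sub>m d d"
    using pow_mat_relation_lowest_term[OF S] .
  define G where "G = mat_poly d c M S"
  have G: "G \<in> carrier_mat d d" unfolding G_def by simp
  have H: "a \<cdot>\<^sub>m 1\<^sub>m d + S * G \<in> carrier_mat d d" using S G by simp
  have "S * (a \<cdot>\<^sub>m 1\<^sub>m d + S * G) = 0\<^sub>m d d"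
    using symmetric_pow_mult_eq_zero[OF S St H] rel S H by (cases r) (auto simp: G_def)
  hence "a \<cdot>\<^sub>m S + S * (S * G) = 0\<^sub>m d d"
    using S G by (simp add: mult_add_distrib_mat[OF S _ mult_carrier_mat[OF S G]]
        mult_smult_distrib[OF S one_carrier_mat])
  hence SSG: "S * (S * G) = (- a) \<cdot>\<^sub>m S"
  proof (intro eq_matI)
    fix i j assume "i < dim_row ((- a) \<cdot>\<^sub>m S)" "j < dim_col ((- a) \<cdot>\<^sub>m S)"
    moreover assume "a \<cdot>\<^sub>m S + S * (S * G) = 0\<^sub>m d d"
    ultimately show "(S * (S * G)) $$ (i,j) = ((- a) \<cdot>\<^sub>m S) $$ (i,j)"
      using S G by (auto dest!: arg_cong[of _ _ "\<lambda>A. A $$ (i,j)"])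
  qed (use S G in auto)
  show ?thesis
  proof
    show "(- 1 / a) \<cdot>\<^sub>m G \<in> carrier_mat d d" using G by simp
    have "G $$ (j, i) = G $$ (i, j)" if "i < d" "j < d" for i j
      using transpose_mat_poly[OF S St] that G unfolding G_def
      by (metis carrier_matD index_transpose_mat(1))
    thus "transpose_mat ((- 1 / a) \<cdot>\<^sub>m G) = (- 1 / a) \<cdot>\<^sub>m G"
      using G by (intro eq_matI) auto
    show "S * ((- 1 / a) \<cdot>\<^sub>m G) = (- 1 / a) \<cdot>\<^sub>m G * S"
      using mult_smult_distrib[OF S G] mult_smult_assoc_mat[OF G S] mat_poly_commute[OF S]
      unfolding G_def by simp
    have "S * (S * ((- 1 / a) \<cdot>\<^sub>m G)) = (- 1 / a) \<cdot>\<^sub>m (S * (S * G))"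
      using mult_smult_distrib[OF S G] mult_smult_distrib[OF S mult_carrier_mat[OF S G]] by simp
    thus "S * (S * ((- 1 / a) \<cdot>\<^sub>m G)) = S" unfolding SSG using a S by (intro eq_matI) auto
  qed
qed

lemma symmetric_is_mp_inverse_mp_inverse:
  fixes S :: "real mat"
  assumes S: "S \<in> carrier_mat d d" and St: "transpose_mat S = S"
  shows "is_mp_inverse S (mp_inverse S)"
proof -
  obtain T where "T \<in> carrier_mat d d" "transpose_mat T = T" "S * T = T * S" "S * (S * T) = S"
    using symmetric_regular_by_polynomial[OF S St] .
  from is_mp_inverse_of_regular_commuting[OF S St this]
  show ?thesis by (rule is_mp_inverse_mp_inverse[OF S])
qed

subsection \<open>Weighted least squares\<close>

lemma weighted_gram_symmetric:
  fixes x :: "'a :: comm_semiring_0 mat"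
  assumes x: "x \<in> carrier_mat m q"
  shows "transpose_mat (transpose_mat x * mat_diag m \<delta> * x) = transpose_mat x * mat_diag m \<delta> * x"
  using transpose_mult3[OF transpose_carrier_mat[THEN iffD2, OF x] mat_diag_dim x] by simp

lemma weighted_gram_residual:
  fixes x P :: "real mat"
  assumes x: "x \<in> carrier_mat m q" and P: "P \<in> carrier_mat q q" and Pt: "transpose_mat P = P"
    and PA: "P * (transpose_mat x * mat_diag m \<delta> * x) = transpose_mat x * mat_diag m \<delta> * x"
  shows "transpose_mat (x - x * P) * mat_diag m \<delta> * (x - x * P) = 0\<^sub>m q q"
proof -
  define XD where "XD = transpose_mat x * mat_diag m \<delta>"
  define A where "A = XD * x"
  have xt: "transpose_mat x \<in> carrier_mat q m" using x by simp
  have XD: "XD \<in> carrier_mat q m" unfolding XD_def using xt by simp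
  have A: "A \<in> carrier_mat q q" unfolding A_def using XD x by simp
  have PA: "P * A = A" using PA unfolding A_def XD_def .
  have AP: "A * P = A"
    using arg_cong[OF PA, of transpose_mat] transpose_mult[OF P A] Pt weighted_gram_symmetric[OF x]
    unfolding A_def XD_def by simp
  have "transpose_mat (x - x * P) * mat_diag m \<delta> = XD - P * XD"
    unfolding XD_def using transpose_minus[OF x mult_carrier_mat[OF x P]] transpose_mult[OF x P] Pt
      minus_mult_distrib_mat[OF xt mult_carrier_mat[OF P xt] mat_diag_dim]
      assoc_mult_mat[OF P xt mat_diag_dim] by simp
  hence "transpose_mat (x - x * P) * mat_diag m \<delta> * (x - x * P) = (XD - P * XD) * (x - x * P)"
    by simp
  also have "\<dots> = (XD * x - XD * (x * P)) - (P * XD * x - P * XD * (x * P))"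
    using minus_mult_distrib_mat[OF XD mult_carrier_mat[OF P XD]
        minus_carrier_mat[OF mult_carrier_mat[OF x P]]]
      mult_minus_distrib_mat[OF XD x mult_carrier_mat[OF x P]]
      mult_minus_distrib_mat[OF mult_carrier_mat[OF P XD] x mult_carrier_mat[OF x P]]
    by simp
  also have "XD * (x * P) = A" using assoc_mult_mat[OF XD x P] AP unfolding A_def by simp
  also have "P * XD * x = A" using assoc_mult_mat[OF P XD x] PA unfolding A_def by simp
  also have "P * XD * (x * P) = A"
    using assoc_mult_mat[OF P XD x] assoc_mult_mat[OF mult_carrier_mat[OF P XD] x P] PA AP
    unfolding A_def by simp
  also have "(XD * x - A) - (A - A) = 0\<^sub>m q q" using A unfolding A_def by (intro eq_matI) auto
  finally show ?thesis .
qed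

lemma symmetric_left_identity_of_weighted_gram:
  fixes x P :: "real mat"
  assumes x: "x \<in> carrier_mat m q" and pos: "\<And>i. i < m \<Longrightarrow> \<delta> i > 0"
    and P: "P \<in> carrier_mat q q" and Pt: "transpose_mat P = P"
    and PA: "P * (transpose_mat x * mat_diag m \<delta> * x) = transpose_mat x * mat_diag m \<delta> * x"
  shows "P * (transpose_mat x * mat_diag m \<delta>) = transpose_mat x * mat_diag m \<delta>"
proof -
  have xt: "transpose_mat x \<in> carrier_mat q m" using x by simp
  have "x - x * P = 0\<^sub>m m q"
    using weighted_gram_eq_zero[OF _ pos weighted_gram_residual[OF x P Pt PA]] x P
    by (simp add: minus_carrier_mat)
  hence "x * P = x"
  proof (intro eq_matI)
    fix i j assume "i < dim_row x" "j < dim_col x"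
    moreover assume "x - x * P = 0\<^sub>m m q"
    ultimately show "(x * P) $$ (i,j) = x $$ (i,j)"
      using x P by (auto dest!: arg_cong[of _ _ "\<lambda>M. M $$ (i,j)"])
  qed (use x P in auto)
  hence "P * transpose_mat x = transpose_mat x" using transpose_mult[OF x P] Pt by simp
  thus ?thesis using assoc_mult_mat[OF P xt mat_diag_dim] by simp
qed

lemma wls_normal_equations:
  fixes x :: "real mat"
  assumes x: "x \<in> carrier_mat m q" and pos: "\<And>i. i < m \<Longrightarrow> \<delta> i > 0"
    and y: "y \<in> carrier_vec m"
  shows "transpose_mat x * mat_diag m \<delta> *\<^sub>v (x *\<^sub>v
      (mp_inverse (transpose_mat x * mat_diag m \<delta> * x) *\<^sub>v (transpose_mat x * mat_diag m \<delta> *\<^sub>v y)))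
    = transpose_mat x * mat_diag m \<delta> *\<^sub>v y"
proof -
  define XD where "XD = transpose_mat x * mat_diag m \<delta>"
  define A where "A = XD * x"
  define B where "B = mp_inverse A"
  have XD: "XD \<in> carrier_mat q m" and A: "A \<in> carrier_mat q q"
    using x by (auto simp: XD_def A_def)
  have "is_mp_inverse A B"
    unfolding B_def A_def XD_def
    by (rule symmetric_is_mp_inverse_mp_inverse[OF A[unfolded A_def XD_def] weighted_gram_symmetric[OF x]])
  hence B: "B \<in> carrier_mat q q" and ABA: "A * B * A = A" and ABt: "transpose_mat (A * B) = A * B"
    using A by (auto simp: is_mp_inverse_def)
  have "XD *\<^sub>v (x *\<^sub>v (B *\<^sub>v (XD *\<^sub>v y))) = A *\<^sub>v (B *\<^sub>v (XD *\<^sub>v y))"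
    unfolding A_def using XD x B y by (simp add: assoc_mult_mat_vec)
  also have "\<dots> = (A * B * XD) *\<^sub>v y"
    using assoc_mult_mat_vec[OF mult_carrier_mat[OF A B] XD y]
      assoc_mult_mat_vec[OF A B mult_mat_vec_carrier[OF XD y]] by simp
  also have "A * B * XD = XD"
    using symmetric_left_identity_of_weighted_gram[OF x pos mult_carrier_mat[OF A B] ABt]
      ABA unfolding A_def XD_def by simp
  finally show ?thesis by (simp add: XD_def A_def B_def)
qed

lemma wls_fit_preserves_weighted_totals:
  fixes x t U :: "real mat"
  assumes x: "x \<in> carrier_mat m q" and pos: "\<And>i. i < m \<Longrightarrow> \<delta> i > 0"
    and y: "y \<in> carrier_vec m" and t: "t \<in> carrier_mat q k"
    and span: "mat_diag m \<delta> * (x * t) = U"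
  shows "transpose_mat U *\<^sub>v (x *\<^sub>v
      (mp_inverse (transpose_mat x * mat_diag m \<delta> * x) *\<^sub>v (transpose_mat x * mat_diag m \<delta> *\<^sub>v y)))
    = transpose_mat U *\<^sub>v y"
proof -
  define XD where "XD = transpose_mat x * mat_diag m \<delta>"
  define b where "b = mp_inverse (transpose_mat x * mat_diag m \<delta> * x) *\<^sub>v (XD *\<^sub>v y)"
  have XD: "XD \<in> carrier_mat q m" using x by (simp add: XD_def)
  have tt: "transpose_mat t \<in> carrier_mat k q" using t by simp
  have "transpose_mat U = transpose_mat (x * t) * mat_diag m \<delta>"
    unfolding span[symmetric] using transpose_mult[OF mat_diag_dim mult_carrier_mat[OF x t]] by simp
  also have "\<dots> = transpose_mat t * XD"
    unfolding XD_def transpose_mult[OF x t]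
    using assoc_mult_mat[OF tt transpose_carrier_mat[THEN iffD2, OF x] mat_diag_dim] by simp
  finally have Ut: "transpose_mat U = transpose_mat t * XD" .
  have U: "transpose_mat U *\<^sub>v v = transpose_mat t *\<^sub>v (XD *\<^sub>v v)" if "v \<in> carrier_vec m" for v
    unfolding Ut using assoc_mult_mat_vec[OF tt XD that] .
  have "x *\<^sub>v b \<in> carrier_vec m" using x by (intro carrier_vecI) simp
  hence "transpose_mat U *\<^sub>v (x *\<^sub>v b) = transpose_mat t *\<^sub>v (XD *\<^sub>v (x *\<^sub>v b))" by (rule U)
  also have "XD *\<^sub>v (x *\<^sub>v b) = XD *\<^sub>v y"
    unfolding b_def XD_def by (rule wls_normal_equations[OF x pos y])
  also have "transpose_mat t *\<^sub>v (XD *\<^sub>v y) = transpose_mat U *\<^sub>v y" by (rule U[OF y, symmetric])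
  finally show ?thesis unfolding b_def XD_def .
qed

lemma design_carrier: "design k X \<in> carrier_mat (k * dim_row X) (k + dim_col X)"
proof -
  have "design k X \<in> carrier_mat (k * dim_row X + 0) (k + dim_col X)"
    unfolding design_def ones_blk_def kron_ones_def by (rule four_block_carrier_mat) auto
  thus ?thesis by simp
qed

theorem mainTheorem7:
  fixes k n p :: nat
    and X :: "real mat" and y :: "real vec"
    and pr :: "nat \<Rightarrow> real"   (* diagonal of \<pi>, flat index r = a*n+i *)
    and w :: "nat \<Rightarrow> real"    (* diagonal of m *)
    and t :: "real mat"
  assumes X: "X \<in> carrier_mat n p"
    and y: "y \<in> carrier_vec (k * n)"
    and pr: "\<And>r. r < k * n \<Longrightarrow> 0 < pr r \<and> pr r < 1"
    and w: "\<And>r. r < k * n \<Longrightarrow> 0 < w r"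
    and t: "t \<in> carrier_mat (k + p) k"
    and span: "design k X * t =
       mat_diag (k * n) (\<lambda>r. 1 / w r) * mat_diag (k * n) (\<lambda>r. 1 / pr r) * ones_blk k n"
  shows "(1 / real n) \<cdot>\<^sub>v (transpose_mat (ones_blk k n) *\<^sub>v (design k X *\<^sub>v
            (mp_inverse (transpose_mat (design k X) * mat_diag (k * n) w * mat_diag (k * n) pr * design k X)
             *\<^sub>v (transpose_mat (design k X) * mat_diag (k * n) w * mat_diag (k * n) pr *\<^sub>v y))))
         = (1 / real n) \<cdot>\<^sub>v (transpose_mat (ones_blk k n) *\<^sub>v y)"
proof -
  define \<delta> where "\<delta> = (\<lambda>r. w r * pr r)"
  have x: "design k X \<in> carrier_mat (k * n) (k + p)" using design_carrier[of k X] X by simp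
  have pos: "\<And>r. r < k * n \<Longrightarrow> 0 < \<delta> r" using w pr by (simp add: \<delta>_def)
  have ones: "ones_blk k n \<in> carrier_mat (k * n) k" by (simp add: ones_blk_def)
  have "mat_diag (k * n) \<delta> * (design k X * t)
      = mat_diag (k * n) (\<lambda>r. \<delta> r * (1 / w r * (1 / pr r))) * ones_blk k n"
    unfolding span using ones by (simp add: assoc_mult_mat[OF mat_diag_dim mat_diag_dim ones, symmetric])
  also have "mat_diag (k * n) (\<lambda>r. \<delta> r * (1 / w r * (1 / pr r))) = 1\<^sub>m (k * n)"
  proof (subst mat_diag_one[symmetric], intro mat_diag_cong)
    fix r assume "r < k * n"
    thus "\<delta> r * (1 / w r * (1 / pr r)) = 1" using w pr by (simp add: \<delta>_def less_imp_neq[symmetric])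
  qed
  finally have "mat_diag (k * n) \<delta> * (design k X * t) = ones_blk k n" using ones by simp
  from wls_fit_preserves_weighted_totals[OF x pos y t this]
  show ?thesis
    using x by (simp add: \<delta>_def assoc_mult_mat[OF transpose_carrier_mat[THEN iffD2, OF x] mat_diag_dim mat_diag_dim])
qed

end
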